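(* Given a connected conjunctive query $q$ and $\varepsilon<1-1/\tau^*(q)$, there exists an algorithm that runs in one round in $\mathrm{MPC}(\varepsilon)$ and reports $\Theta\!\left(\mathbf E[|q(I)|]/p^{\tau^*(q)(1-\varepsilon)-1}\right)$ correct answers in expectation on matching databases.
   Context: Conjunctive queries $q(x_1,\ldots,x_k)=S_1(\bar x_1),\ldots,S_\ell(\bar x_\ell)$ are full and self-join-free; connected means the hypergraph (variables as vertices, hyperedge $\mathrm{vars}(S_j)$ per atom) is connected. $\tau^*(q)=\min\sum_iv_i$ over $v_i\ge0$ with $\sum_{i:x_i\in\mathrm{vars}(S_j)}v_i\ge1$ for all $j$. A matching database over $[n]$: each $S_j$ has exactly $n$ tuples and each column contains each value of $[n]$ exactly once; $\mathbf E[|q(I)|]$ is over a uniformly random matching database. $\mathrm{MPC}(\varepsilon)$: $p$ servers of unlimited power, private channels, rounds of computation and communication, each server receiving $O(N/p^{1-\varepsilon})$ bits ($O(n/p^{1-\varepsilon})$ tuples) per round, shared randomness. *)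

theory Defs
  imports "HOL-Probability.Probability"
begin

(* A full self-join-free conjunctive query with variables 0..<k is given by the
   list of its atoms; atom j (relation symbol S_j) is the list of its variables. *)

definition wf_query :: "nat \<Rightarrow> nat list list \<Rightarrow> bool" where
  "wf_query k atoms \<longleftrightarrow> atoms \<noteq> [] \<and>
     (\<forall>a \<in> set atoms. a \<noteq> [] \<and> distinct a \<and> set a \<subseteq> {0..<k}) \<and>
     (\<forall>x<k. \<exists>a \<in> set atoms. x \<in> set a)"

definition query_adj :: "nat list list \<Rightarrow> (nat \<times> nat) set" where
  "query_adj atoms = {(u, v). \<exists>a \<in> set atoms. u \<in> set a \<and> v \<in> set a}"

definition connected_query :: "nat \<Rightarrow> nat list list \<Rightarrow> bool" where
  "connected_query k atoms \<longleftrightarrow> (\<forall>x<k. \<forall>y<k. (x, y) \<in> (query_adj atoms)\<^sup>*)"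

definition frac_vertex_cover :: "nat list list \<Rightarrow> (nat \<Rightarrow> real) \<Rightarrow> bool" where
  "frac_vertex_cover atoms v \<longleftrightarrow> (\<forall>i. 0 \<le> v i) \<and>
     (\<forall>a \<in> set atoms. (\<Sum>i\<in>set a. v i) \<ge> 1)"

definition tau_star :: "nat \<Rightarrow> nat list list \<Rightarrow> real" where
  "tau_star k atoms = Inf {(\<Sum>i<k. v i) | v. frac_vertex_cover atoms v}"

definition tuples :: "nat \<Rightarrow> nat \<Rightarrow> nat list set" where
  "tuples n r = {t. length t = r \<and> set t \<subseteq> {0..<n}}"

definition matching_rel :: "nat \<Rightarrow> nat \<Rightarrow> nat list set \<Rightarrow> bool" where
  "matching_rel n r S \<longleftrightarrow> S \<subseteq> tuples n r \<and> card S = n \<and>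
     (\<forall>i<r. bij_betw (\<lambda>t. t ! i) S {0..<n})"

definition matching_dbs :: "nat list list \<Rightarrow> nat \<Rightarrow> (nat \<Rightarrow> nat list set) set" where
  "matching_dbs atoms n = {D. (\<forall>j<length atoms. matching_rel n (length (atoms ! j)) (D j)) \<and>
                              (\<forall>j\<ge>length atoms. D j = {})}"

definition answers :: "nat \<Rightarrow> nat list list \<Rightarrow> (nat \<Rightarrow> nat list set) \<Rightarrow> nat list set" where
  "answers k atoms D = {xs. length xs = k \<and>
     (\<forall>j<length atoms. map (\<lambda>x. xs ! x) (atoms ! j) \<in> D j)}"

definition expected_answers :: "nat \<Rightarrow> nat list list \<Rightarrow> nat \<Rightarrow> real" where
  "expected_answers k atoms n =
     measure_pmf.expectation (pmf_of_set (matching_dbs atoms n))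
       (\<lambda>D. real (card (answers k atoms D)))"

(* One-round MPC(eps) algorithm (with each input relation S_j held by its own
   input server, shared randomness).  The shared randomness is modelled as a
   random choice (pmf R) of a message function F: F j s S is the set of tuples
   of relation S_j = S that is sent to server s < p.  Every server receives at
   most C * n / p^(1-eps) tuples in the round. *)
definition one_round_mpc ::
  "nat list list \<Rightarrow> nat \<Rightarrow> nat \<Rightarrow> real \<Rightarrow> real \<Rightarrow>
   (nat \<Rightarrow> nat \<Rightarrow> nat list set \<Rightarrow> nat list set) pmf \<Rightarrow> bool" where
  "one_round_mpc atoms n p eps C R \<longleftrightarrow> 0 \<le> eps \<and> eps < 1 \<and>
     (\<forall>F \<in> set_pmf R.
        (\<forall>j<length atoms. \<forall>s<p. \<forall>S. F j s S \<subseteq> S) \<and>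
        (\<forall>D. (\<forall>j<length atoms. D j \<subseteq> tuples n (length (atoms ! j))) \<longrightarrow>
           (\<forall>s<p. real (\<Sum>j<length atoms. card (F j s (D j))) \<le> C * real n / real p powr (1 - eps))))"

(* Answers reported by the algorithm: every server s < p reports the answers of q
   on the data it received (these are correct answers, since received tuples are
   genuine input tuples); we count distinct reported answers. *)
definition reported :: "nat \<Rightarrow> nat list list \<Rightarrow> nat \<Rightarrow>
   (nat \<Rightarrow> nat \<Rightarrow> nat list set \<Rightarrow> nat list set) \<Rightarrow> (nat \<Rightarrow> nat list set) \<Rightarrow> nat list set" where
  "reported k atoms p F D = (\<Union>s<p. answers k atoms (\<lambda>j. F j s (D j)))"

definition expected_reported :: "nat \<Rightarrow> nat list list \<Rightarrow> nat \<Rightarrow> nat \<Rightarrow>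
   (nat \<Rightarrow> nat \<Rightarrow> nat list set \<Rightarrow> nat list set) pmf \<Rightarrow> real" where
  "expected_reported k atoms n p R =
     measure_pmf.expectation (pmf_of_set (matching_dbs atoms n))
       (\<lambda>D. measure_pmf.expectation R (\<lambda>F. real (card (reported k atoms p F D))))"

end

theory Submission
  imports Defs
begin

(*
  The HyperCube algorithm. Let v be an optimal fractional vertex cover and give variable x_i a
  share g_i ~ p^((1-eps) v_i); the grid of cells [g_0] x ... x [g_(k-1)] has Theta(p^(tau*(1-eps)))
  >= p cells, and p distinct cells are given to the servers. With independent random hash
  functions, every tuple of S_j is sent to the servers whose cell agrees with the hashes of its
  values, and a server drops S_j altogether if it would receive more than T ~ n/p^(1-eps) of its
  tuples, which enforces the load bound.
  An answer c lies in the cell of a fixed server with probability 1/prod g. Given this, on a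
  matching database every other tuple of S_j disagrees with c in all columns, so it lands in
  the same cell with probability 1/prod_(i in S_j) g_i <= p^-(1-eps), the cover condition.
  By Markov's inequality the server then overflows with probability at most 1/2. Hence c is
  reported with probability between p/(2 prod g) and p/prod g, and averaging over the
  database gives the claim.
*)

section \<open>Fractional vertex covers\<close>

lemma wf_query_atom_less:
  assumes "wf_query k atoms" and "a \<in> set atoms" and "x \<in> set a"
  shows "x < k"
  using assms unfolding wf_query_def by fastforce

lemma frac_vertex_cover_truncate:
  assumes wf: "wf_query k atoms" and w: "frac_vertex_cover atoms w"
  shows "frac_vertex_cover atoms (\<lambda>i. if i < k then min (w i) 1 else 0)"
    and "(\<Sum>i<k. if i < k then min (w i) 1 else 0) \<le> (\<Sum>i<k. w i)"
proof -
  let ?w' = "\<lambda>i. if i < k then min (w i) 1 else (0::real)"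
  have w0: "\<And>i. 0 \<le> w i" using w unfolding frac_vertex_cover_def by auto
  have "1 \<le> (\<Sum>i\<in>set a. ?w' i)" if a: "a \<in> set atoms" for a
  proof (cases "\<exists>i\<in>set a. 1 \<le> w i")
    case True
    then obtain j where j: "j \<in> set a" "1 \<le> w j" by auto
    have "j < k" using wf_query_atom_less[OF wf a j(1)] .
    hence "?w' j = 1" using j by auto
    moreover have "?w' j \<le> (\<Sum>i\<in>set a. ?w' i)"
      by (rule member_le_sum) (use j w0 in auto)
    ultimately show ?thesis by simp
  next
    case False
    have "(\<Sum>i\<in>set a. ?w' i) = (\<Sum>i\<in>set a. w i)"
      using False wf_query_atom_less[OF wf a] by (intro sum.cong) auto
    thus ?thesis using w a unfolding frac_vertex_cover_def by auto
  qed
  thus "frac_vertex_cover atoms ?w'" using w0 unfolding frac_vertex_cover_def by auto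
  show "(\<Sum>i<k. ?w' i) \<le> (\<Sum>i<k. w i)" by (intro sum_mono) auto
qed

text \<open>The covers with values in \<open>[0,1]\<close> and support in \<open>{0..<k}\<close> form a compact set that
  by truncation contains an optimal cover, so the infimum defining \<open>\<tau>*\<close> is a minimum.\<close>

lemma tau_star_attained:
  assumes wf: "wf_query k atoms"
  obtains v where "frac_vertex_cover atoms v" and "(\<Sum>i<k. v i) = tau_star k atoms"
proof -
  define S :: "(nat \<Rightarrow> real) set" where
    "S = PiE UNIV (\<lambda>i. if i < k then {0..1} else {0}) \<inter> {v. frac_vertex_cover atoms v}"
  have "compactin (product_topology (\<lambda>i. euclidean) UNIV) (PiE UNIV (\<lambda>i. if i < k then {0..1} else {0::real}))"
    by (subst compactin_PiE) auto
  moreover have "closed {v :: nat \<Rightarrow> real. frac_vertex_cover atoms v}"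
  proof -
    have "closed {v :: nat \<Rightarrow> real. 0 \<le> v i}" "closed {v :: nat \<Rightarrow> real. 1 \<le> sum v A}" for i A
      by (rule closed_Collect_le; auto intro!: continuous_on_sum continuous_on_product_coordinates)+
    thus ?thesis
      unfolding frac_vertex_cover_def Collect_conj_eq Collect_all_eq Collect_ball_eq by auto
  qed
  ultimately have "compact S"
    unfolding S_def by (intro compact_Int_closed) (simp_all add: euclidean_product_topology)
  define one :: "nat \<Rightarrow> real" where "one = (\<lambda>i. if i < k then 1 else 0)"
  have "frac_vertex_cover atoms (\<lambda>i. 1)"
    using wf unfolding frac_vertex_cover_def wf_query_def
    by (auto simp: Suc_le_eq card_gt_0_iff)
  from frac_vertex_cover_truncate(1)[OF wf this] have "frac_vertex_cover atoms one"
    by (simp add: one_def cong: if_cong)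
  hence "one \<in> S" unfolding S_def one_def by auto
  moreover have "continuous_on S (\<lambda>v. \<Sum>i<k. v i)"
    by (intro continuous_on_sum) (auto intro: continuous_on_subset[OF continuous_on_product_coordinates])
  ultimately obtain v where vS: "v \<in> S" and vmin: "\<And>w. w \<in> S \<Longrightarrow> (\<Sum>i<k. v i) \<le> (\<Sum>i<k. w i)"
    using continuous_attains_inf[OF \<open>compact S\<close>] by blast
  have cover: "frac_vertex_cover atoms v" using vS unfolding S_def by auto
  have "tau_star k atoms = (\<Sum>i<k. v i)"
    unfolding tau_star_def
  proof (rule cInf_eq_minimum)
    fix x assume "x \<in> {\<Sum>i<k. v i |v. frac_vertex_cover atoms v}"
    then obtain w where w: "frac_vertex_cover atoms w" and x: "x = (\<Sum>i<k. w i)" by auto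
    have "(\<lambda>i. if i < k then min (w i) 1 else 0) \<in> S"
      using frac_vertex_cover_truncate(1)[OF wf w] w unfolding S_def frac_vertex_cover_def by auto
    from vmin[OF this] show "(\<Sum>i<k. v i) \<le> x"
      using frac_vertex_cover_truncate(2)[OF wf w] x by linarith
  qed (use cover in auto)
  thus thesis using that cover by simp
qed

lemma one_le_sum_frac_vertex_cover:
  assumes "wf_query k atoms" and "frac_vertex_cover atoms v"
  shows "1 \<le> (\<Sum>i<k. v i)"
proof -
  obtain a where a: "a \<in> set atoms" using assms(1) unfolding wf_query_def by (metis last_in_set)
  have "1 \<le> (\<Sum>i\<in>set a. v i)" using assms(2) a unfolding frac_vertex_cover_def by auto
  also have "\<dots> \<le> (\<Sum>i<k. v i)"
    using assms a wf_query_atom_less unfolding frac_vertex_cover_def by (intro sum_mono2) auto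
  finally show ?thesis .
qed

section \<open>Matching databases\<close>

lemma finite_tuples: "finite (tuples n r)"
proof -
  have "tuples n r = {xs. set xs \<subseteq> {0..<n} \<and> length xs = r}" unfolding tuples_def by auto
  thus ?thesis by (simp add: finite_lists_length_eq)
qed

lemma matching_dbsD:
  assumes "D \<in> matching_dbs atoms n" and "j < length atoms"
  shows "D j \<subseteq> tuples n (length (atoms!j))" and "finite (D j)" and "card (D j) = n"
    and "\<And>t t' m. t \<in> D j \<Longrightarrow> t' \<in> D j \<Longrightarrow> m < length (atoms!j) \<Longrightarrow> t!m = t'!m \<Longrightarrow> t = t'"
proof -
  have mr: "matching_rel n (length (atoms!j)) (D j)" using assms unfolding matching_dbs_def by auto
  show sub: "D j \<subseteq> tuples n (length (atoms!j))" using mr unfolding matching_rel_def by auto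
  show "finite (D j)" using finite_subset[OF sub finite_tuples] .
  show "card (D j) = n" using mr unfolding matching_rel_def by auto
  fix t t' m assume "t \<in> D j" "t' \<in> D j" "m < length (atoms!j)" "t!m = t'!m"
  with mr show "t = t'" unfolding matching_rel_def bij_betw_def by (auto dest: inj_onD)
qed

lemma finite_matching_dbs: "finite (matching_dbs atoms n)"
proof -
  let ?TT = "\<Union>j<length atoms. tuples n (length (atoms!j))"
  have "matching_dbs atoms n \<subseteq>
      {D. \<forall>x. (x \<in> {..<length atoms} \<longrightarrow> D x \<in> Pow ?TT) \<and> (x \<notin> {..<length atoms} \<longrightarrow> D x = {})}"
    unfolding matching_dbs_def matching_rel_def by auto
  thus ?thesis
    by (rule finite_subset) (intro finite_set_of_finite_funs, auto simp: finite_tuples)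
qed

lemma matching_dbs_nonempty:
  assumes wf: "wf_query k atoms"
  shows "matching_dbs atoms n \<noteq> {}"
proof -
  define D where "D j = (if j < length atoms then (\<lambda>x. replicate (length (atoms!j)) x) ` {0..<n} else {})" for j
  have "matching_rel n (length (atoms!j)) (D j)" if j: "j < length atoms" for j
  proof -
    define r where "r = length (atoms!j)"
    have "r > 0" using wf j unfolding wf_query_def r_def by (auto simp: nth_mem)
    hence inj: "inj_on (\<lambda>x. replicate r x) {0..<n}" by (auto simp: inj_on_def)
    have "bij_betw (\<lambda>t. t ! i) ((\<lambda>x. replicate r x) ` {0..<n}) {0..<n}" if "i < r" for i
      using that by (intro bij_betw_imageI) (auto simp: inj_on_def image_image)
    thus ?thesis using j card_image[OF inj]
      unfolding matching_rel_def D_def r_def[symmetric] tuples_def by auto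
  qed
  hence "D \<in> matching_dbs atoms n" unfolding matching_dbs_def D_def by auto
  thus ?thesis by auto
qed

lemma answers_less:
  assumes wf: "wf_query k atoms" and D: "D \<in> matching_dbs atoms n"
    and c: "c \<in> answers k atoms D" and i: "i < k"
  shows "c!i < n"
proof -
  obtain j m where j: "j < length atoms" and m: "m < length (atoms!j)" "atoms!j!m = i"
    using wf i unfolding wf_query_def by (metis in_set_conv_nth)
  have "map (\<lambda>x. c!x) (atoms!j) \<in> tuples n (length (atoms!j))"
    using c j matching_dbsD(1)[OF D j] unfolding answers_def by auto
  thus ?thesis using m unfolding tuples_def by (auto simp: subset_iff in_set_conv_nth)
qed

lemma finite_answers:
  assumes "wf_query k atoms" and "D \<in> matching_dbs atoms n"
  shows "finite (answers k atoms D)"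
proof (rule finite_subset)
  show "answers k atoms D \<subseteq> {xs. set xs \<subseteq> {0..<n} \<and> length xs = k}"
    using answers_less[OF assms] unfolding answers_def by (auto simp: in_set_conv_nth)
qed (simp add: finite_lists_length_eq)

section \<open>Random hashing into a grid\<close>

definition hash_pmf :: "nat \<Rightarrow> nat \<Rightarrow> (nat \<Rightarrow> nat) \<Rightarrow> (nat \<times> nat \<Rightarrow> nat) pmf" where
  "hash_pmf k n g = Pi_pmf ({..<k} \<times> {..<n}) 0 (\<lambda>z. pmf_of_set {..<g (fst z)})"

lemma finite_set_hash_pmf:
  assumes "\<And>i. 1 \<le> g i"
  shows "finite (set_pmf (hash_pmf k n g))"
proof -
  have "set_pmf (hash_pmf k n g) =
      PiE_dflt ({..<k} \<times> {..<n}) 0 (set_pmf \<circ> (\<lambda>z. pmf_of_set {..<g (fst z)}))"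
    unfolding hash_pmf_def by (rule set_Pi_pmf) auto
  also have "finite \<dots>"
  proof (rule finite_PiE_dflt)
    fix z :: "nat \<times> nat"
    have "{..<g (fst z)} \<noteq> {}" using assms[of "fst z"] by (auto simp: lessThan_empty_iff)
    thus "finite ((set_pmf \<circ> (\<lambda>z. pmf_of_set {..<g (fst z)})) z)" by simp
  qed auto
  finally show ?thesis .
qed

lemma prob_hash_pmf_agree:
  assumes Z: "Z \<subseteq> {..<k} \<times> {..<n}" and y: "\<And>z. z \<in> Z \<Longrightarrow> y z < g (fst z)"
  shows "measure_pmf.prob (hash_pmf k n g) {h. \<forall>z\<in>Z. h z = y z} = (\<Prod>z\<in>Z. 1 / real (g (fst z)))"
proof -
  define B where "B z = (if z \<in> Z then {y z} else UNIV)" for z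
  have "{h. \<forall>z\<in>Z. h z = y z} = Pi ({..<k} \<times> {..<n}) B"
    using Z unfolding B_def Pi_def by auto
  hence "measure_pmf.prob (hash_pmf k n g) {h. \<forall>z\<in>Z. h z = y z}
        = (\<Prod>z\<in>{..<k} \<times> {..<n}. measure_pmf.prob (pmf_of_set {..<g (fst z)}) (B z))"
    unfolding hash_pmf_def by (simp add: measure_Pi_pmf_Pi)
  also have "\<dots> = (\<Prod>z\<in>{..<k} \<times> {..<n}. if z \<in> Z then 1 / real (g (fst z)) else 1)"
  proof (intro prod.cong refl)
    fix z
    show "measure_pmf.prob (pmf_of_set {..<g (fst z)}) (B z) = (if z \<in> Z then 1 / real (g (fst z)) else 1)"
    proof (cases "z \<in> Z")
      case True
      hence "{..<g (fst z)} \<inter> {y z} = {y z}" and "{..<g (fst z)} \<noteq> {}" using y[OF True] by auto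
      thus ?thesis using True by (simp add: B_def measure_pmf_of_set)
    qed (simp add: B_def)
  qed
  also have "\<dots> = (\<Prod>z\<in>Z. 1 / real (g (fst z)))"
    using Z by (subst prod.If_cases) (auto simp: Int_absorb1 intro!: prod.neutral)
  finally show ?thesis .
qed

lemma prod_set_distinct_eq_prod_nth:
  assumes "distinct a"
  shows "(\<Prod>i\<in>set a. f i) = (\<Prod>m<length a. f (a!m))"
proof -
  have "set a = (\<lambda>m. a!m) ` {..<length a}" by (auto simp: in_set_conv_nth)
  thus ?thesis using assms by (simp add: prod.reindex inj_on_def nth_eq_iff_index_eq)
qed

definition answer_in_cell :: "nat \<Rightarrow> nat list \<Rightarrow> (nat \<Rightarrow> nat) \<Rightarrow> (nat \<times> nat \<Rightarrow> nat) set" where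
  "answer_in_cell k c cell = {h. \<forall>i<k. h (i, c!i) = cell i}"

definition tuple_in_cell :: "(nat \<times> nat \<Rightarrow> nat) \<Rightarrow> nat list \<Rightarrow> (nat \<Rightarrow> nat) \<Rightarrow> nat list \<Rightarrow> bool" where
  "tuple_in_cell h a cell t \<longleftrightarrow> (\<forall>m<length a. h (a!m, t!m) = cell (a!m))"

lemma prob_answer_in_cell:
  assumes c: "\<And>i. i < k \<Longrightarrow> c!i < n" and cell: "\<And>i. i < k \<Longrightarrow> cell i < g i"
  shows "measure_pmf.prob (hash_pmf k n g) (answer_in_cell k c cell) = 1 / (\<Prod>i<k. real (g i))"
proof -
  define Z where "Z = (\<lambda>i. (i, c!i)) ` {..<k}"
  have "answer_in_cell k c cell = {h. \<forall>z\<in>Z. h z = cell (fst z)}"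
    unfolding answer_in_cell_def Z_def by auto
  also have "measure_pmf.prob (hash_pmf k n g) \<dots> = (\<Prod>z\<in>Z. 1 / real (g (fst z)))"
    by (rule prob_hash_pmf_agree) (use c cell in \<open>auto simp: Z_def\<close>)
  also have "\<dots> = 1 / (\<Prod>i<k. real (g i))"
    unfolding Z_def by (subst prod.reindex) (auto simp: inj_on_def prod_dividef)
  finally show ?thesis .
qed

text \<open>For a tuple disagreeing with \<open>c\<close> in every column the two events concern disjoint sets of
  hash values, hence are independent.\<close>

lemma prob_answer_and_tuple_in_cell:
  assumes a: "distinct a" "set a \<subseteq> {..<k}" and t: "length t = length a"
    and t_less: "\<And>m. m < length a \<Longrightarrow> t!m < n" and t_ne: "\<And>m. m < length a \<Longrightarrow> t!m \<noteq> c!(a!m)"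
    and c: "\<And>i. i < k \<Longrightarrow> c!i < n" and cell: "\<And>i. i < k \<Longrightarrow> cell i < g i"
  shows "measure_pmf.prob (hash_pmf k n g) (answer_in_cell k c cell \<inter> {h. tuple_in_cell h a cell t})
     = 1 / (\<Prod>i<k. real (g i)) * (1 / (\<Prod>i\<in>set a. real (g i)))"
proof -
  define Z1 where "Z1 = (\<lambda>i. (i, c!i)) ` {..<k}"
  define Z2 where "Z2 = (\<lambda>m. (a!m, t!m)) ` {..<length a}"
  have a_less: "\<And>m. m < length a \<Longrightarrow> a!m < k" using a(2) nth_mem by fastforce
  have "answer_in_cell k c cell \<inter> {h. tuple_in_cell h a cell t} = {h. \<forall>z\<in>Z1 \<union> Z2. h z = cell (fst z)}"
    unfolding answer_in_cell_def tuple_in_cell_def Z1_def Z2_def by auto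
  also have "measure_pmf.prob (hash_pmf k n g) \<dots> = (\<Prod>z\<in>Z1 \<union> Z2. 1 / real (g (fst z)))"
    by (rule prob_hash_pmf_agree) (use c cell t_less a_less in \<open>auto simp: Z1_def Z2_def\<close>)
  also have "\<dots> = (\<Prod>z\<in>Z1. 1 / real (g (fst z))) * (\<Prod>z\<in>Z2. 1 / real (g (fst z)))"
    by (rule prod.union_disjoint) (use t_ne in \<open>force simp: Z1_def Z2_def\<close>)+
  also have "(\<Prod>z\<in>Z1. 1 / real (g (fst z))) = 1 / (\<Prod>i<k. real (g i))"
    unfolding Z1_def by (subst prod.reindex) (auto simp: inj_on_def prod_dividef)
  also have "(\<Prod>z\<in>Z2. 1 / real (g (fst z))) = 1 / (\<Prod>i\<in>set a. real (g i))"
    unfolding Z2_def prod_set_distinct_eq_prod_nth[OF a(1)] using a(1)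
    by (subst prod.reindex) (auto simp: inj_on_def nth_eq_iff_index_eq prod_dividef)
  finally show ?thesis .
qed

section \<open>The HyperCube algorithm\<close>

definition cell_share :: "nat list list \<Rightarrow> (nat \<Rightarrow> nat \<Rightarrow> nat) \<Rightarrow> (nat \<times> nat \<Rightarrow> nat) \<Rightarrow>
    nat \<Rightarrow> nat \<Rightarrow> nat list set \<Rightarrow> nat list set" where
  "cell_share atoms \<sigma> h j s S = {t \<in> S. tuple_in_cell h (atoms!j) (\<sigma> s) t}"

definition hypercube_msg :: "real \<Rightarrow> nat list list \<Rightarrow> (nat \<Rightarrow> nat \<Rightarrow> nat) \<Rightarrow> (nat \<times> nat \<Rightarrow> nat) \<Rightarrow>
    nat \<Rightarrow> nat \<Rightarrow> nat list set \<Rightarrow> nat list set" where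
  "hypercube_msg T atoms \<sigma> h j s S =
     (if real (card (cell_share atoms \<sigma> h j s S)) \<le> T then cell_share atoms \<sigma> h j s S else {})"

lemma reported_hypercube_msgD:
  assumes wf: "wf_query k atoms" and c: "c \<in> reported k atoms p (hypercube_msg T atoms \<sigma> h) D"
  shows "c \<in> answers k atoms D" and "\<exists>s<p. h \<in> answer_in_cell k c (\<sigma> s)"
proof -
  obtain s where s: "s < p" and cs: "c \<in> answers k atoms (\<lambda>j. hypercube_msg T atoms \<sigma> h j s (D j))"
    using c unfolding reported_def by auto
  have share: "map (\<lambda>x. c!x) (atoms!j) \<in> cell_share atoms \<sigma> h j s (D j)" if "j < length atoms" for j
    using cs that unfolding answers_def hypercube_msg_def by (auto split: if_splits)
  thus "c \<in> answers k atoms D"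
    using cs unfolding answers_def cell_share_def by auto
  have "h (i, c!i) = \<sigma> s i" if i: "i < k" for i
  proof -
    obtain j m where j: "j < length atoms" and m: "m < length (atoms!j)" "atoms!j!m = i"
      using wf i unfolding wf_query_def by (metis in_set_conv_nth)
    show ?thesis using share[OF j] m unfolding cell_share_def tuple_in_cell_def by auto
  qed
  thus "\<exists>s<p. h \<in> answer_in_cell k c (\<sigma> s)" using s unfolding answer_in_cell_def by auto
qed

lemma reported_hypercube_msgI:
  assumes wf: "wf_query k atoms" and c: "c \<in> answers k atoms D" and s: "s < p"
    and h: "h \<in> answer_in_cell k c (\<sigma> s)"
    and fits: "\<And>j. j < length atoms \<Longrightarrow> real (card (cell_share atoms \<sigma> h j s (D j))) \<le> T"
  shows "c \<in> reported k atoms p (hypercube_msg T atoms \<sigma> h) D"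
proof -
  have "map (\<lambda>x. c!x) (atoms!j) \<in> hypercube_msg T atoms \<sigma> h j s (D j)" if j: "j < length atoms" for j
  proof -
    have "atoms!j!m < k" if "m < length (atoms!j)" for m
      using wf_query_atom_less[OF wf nth_mem[OF j] nth_mem[OF that]] .
    hence "tuple_in_cell h (atoms!j) (\<sigma> s) (map (\<lambda>x. c!x) (atoms!j))"
      using h unfolding tuple_in_cell_def answer_in_cell_def by simp
    thus ?thesis using c j fits[OF j] unfolding answers_def hypercube_msg_def cell_share_def by auto
  qed
  thus ?thesis using c s unfolding reported_def answers_def by auto
qed

lemma one_round_mpc_hypercube_msg:
  assumes "0 \<le> eps" "eps < 1" "0 \<le> T"
    and "real (length atoms) * T \<le> C * real n / real p powr (1 - eps)"
  shows "one_round_mpc atoms n p eps C (map_pmf (hypercube_msg T atoms \<sigma>) H)"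
  unfolding one_round_mpc_def
proof (intro conjI ballI allI impI assms(1,2))
  fix F assume "F \<in> set_pmf (map_pmf (hypercube_msg T atoms \<sigma>) H)"
  then obtain h where F: "F = hypercube_msg T atoms \<sigma> h" by auto
  fix j s S show "F j s S \<subseteq> S" unfolding F hypercube_msg_def cell_share_def by auto
next
  fix F assume "F \<in> set_pmf (map_pmf (hypercube_msg T atoms \<sigma>) H)"
  then obtain h where F: "F = hypercube_msg T atoms \<sigma> h" by auto
  fix D s
  have "real (\<Sum>j<length atoms. card (F j s (D j))) = (\<Sum>j<length atoms. real (card (F j s (D j))))"
    by simp
  also have "\<dots> \<le> (\<Sum>j<length atoms. T)"
    by (intro sum_mono) (simp add: F hypercube_msg_def assms(3))
  also have "\<dots> \<le> C * real n / real p powr (1 - eps)" using assms(4) by simp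
  finally show "real (\<Sum>j<length atoms. card (F j s (D j))) \<le> C * real n / real p powr (1 - eps)" .
qed

lemma expected_answers_nonneg: "0 \<le> expected_answers k atoms n"
  unfolding expected_answers_def by (intro integral_nonneg_AE) simp

lemma expectation_pmf_of_set_mono:
  fixes f g :: "'a \<Rightarrow> real"
  assumes "finite A" "A \<noteq> {}" "\<And>x. x \<in> A \<Longrightarrow> f x \<le> g x"
  shows "measure_pmf.expectation (pmf_of_set A) f \<le> measure_pmf.expectation (pmf_of_set A) g"
  using assms by (simp add: integral_pmf_of_set divide_right_mono sum_mono)

locale hypercube =
  fixes k n p :: nat and atoms :: "nat list list" and g :: "nat \<Rightarrow> nat"
    and \<sigma> :: "nat \<Rightarrow> nat \<Rightarrow> nat" and T :: real
  assumes wf: "wf_query k atoms"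
    and shares_pos: "\<And>i. 1 \<le> g i"
    and cell_less: "\<And>s i. s < p \<Longrightarrow> i < k \<Longrightarrow> \<sigma> s i < g i"
    and cells_distinct: "\<And>s s'. s < p \<Longrightarrow> s' < p \<Longrightarrow> s \<noteq> s' \<Longrightarrow> \<exists>i<k. \<sigma> s i \<noteq> \<sigma> s' i"
    and threshold_large: "\<And>j. j < length atoms \<Longrightarrow>
          2 * real (length atoms) * (1 + real n / (\<Prod>i\<in>set (atoms!j). real (g i))) \<le> T"
begin

abbreviation hash :: "(nat \<times> nat \<Rightarrow> nat) pmf" where
  "hash \<equiv> hash_pmf k n g"

definition cells :: real where
  "cells = (\<Prod>i<k. real (g i))"

lemma cells_pos: "0 < cells"
  unfolding cells_def using shares_pos by (intro prod_pos) (auto simp: Suc_le_eq)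

lemma integrable_hash: "integrable (measure_pmf hash) (f :: _ \<Rightarrow> real)"
  by (rule integrable_measure_pmf_finite[OF finite_set_hash_pmf[OF shares_pos]])

lemma prob_answer_in_server_cell:
  assumes "D \<in> matching_dbs atoms n" "c \<in> answers k atoms D" "s < p"
  shows "measure_pmf.prob hash (answer_in_cell k c (\<sigma> s)) = 1 / cells"
  unfolding cells_def using assms
  by (intro prob_answer_in_cell answers_less[OF wf] cell_less)

text \<open>On a matching database the answer \<open>c\<close> meets every other tuple of \<open>S\<^sub>j\<close> in no column, so
  each of these \<open>n - 1\<close> tuples shares the cell of \<open>c\<close> with probability \<open>1 / \<Prod>\<^bsub>i\<in>S\<^sub>j\<^esub> g i\<close>.\<close>

lemma expectation_cell_share:
  assumes D: "D \<in> matching_dbs atoms n" and c: "c \<in> answers k atoms D" and s: "s < p"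
    and j: "j < length atoms"
  shows "measure_pmf.expectation hash
           (\<lambda>h. indicator (answer_in_cell k c (\<sigma> s)) h * real (card (cell_share atoms \<sigma> h j s (D j))))
         \<le> (1 + real n / (\<Prod>i\<in>set (atoms!j). real (g i))) / cells"
proof -
  define a where "a = atoms!j"
  define E where "E = answer_in_cell k c (\<sigma> s)"
  define In where "In t = {h. tuple_in_cell h a (\<sigma> s) t}" for t
  define P where "P = (\<Prod>i\<in>set a. real (g i))"
  define u where "u = map (\<lambda>x. c!x) a"
  have "a \<in> set atoms" unfolding a_def using j by simp
  hence a: "distinct a" "set a \<subseteq> {..<k}" using wf wf_query_atom_less[OF wf] unfolding wf_query_def by auto
  have fin: "finite (D j)" and card: "card (D j) = n" and tup: "D j \<subseteq> tuples n (length a)"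
    using matching_dbsD[OF D j] unfolding a_def by auto
  have u: "u \<in> D j" using c j unfolding answers_def u_def a_def by auto
  have P_pos: "0 < P" unfolding P_def using shares_pos by (intro prod_pos) (auto simp: Suc_le_eq)
  have pointwise: "indicator E h * real (card (cell_share atoms \<sigma> h j s (D j)))
      = (\<Sum>t\<in>D j. indicator (E \<inter> In t) h)" for h
    using fin by (simp add: cell_share_def a_def[symmetric] In_def indicator_def sum.If_cases Int_def)
  have other: "measure_pmf.prob hash (E \<inter> In t) = 1 / cells * (1 / P)" if t: "t \<in> D j - {u}" for t
  proof -
    have "length t = length a" and "\<And>m. m < length a \<Longrightarrow> t!m < n"
      using t tup unfolding tuples_def by (auto simp: subset_iff)
    moreover have "t!m \<noteq> c!(a!m)" if "m < length a" for m
      using matching_dbsD(4)[OF D j, of t u m] t u that unfolding u_def a_def by auto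
    ultimately show ?thesis
      unfolding E_def In_def cells_def P_def
      by (rule prob_answer_and_tuple_in_cell[OF a]) (auto intro: answers_less[OF wf D c] cell_less[OF s])
  qed
  have "measure_pmf.expectation hash (\<lambda>h. indicator E h * real (card (cell_share atoms \<sigma> h j s (D j))))
      = (\<Sum>t\<in>D j. measure_pmf.prob hash (E \<inter> In t))"
    unfolding pointwise by (subst Bochner_Integration.integral_sum[OF integrable_hash]) simp
  also have "\<dots> = measure_pmf.prob hash (E \<inter> In u) + (\<Sum>t\<in>D j - {u}. measure_pmf.prob hash (E \<inter> In t))"
    using fin u by (simp add: sum.remove)
  also have "\<dots> \<le> measure_pmf.prob hash E + (\<Sum>t\<in>D j - {u}. 1 / cells * (1 / P))"
    using other by (intro add_mono measure_pmf.finite_measure_mono) auto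
  also have "\<dots> = (1 + real (n - 1) / P) / cells"
    using fin u card cells_pos P_pos unfolding E_def prob_answer_in_server_cell[OF D c s]
    by (simp add: card_Diff_singleton field_simps)
  also have "\<dots> \<le> (1 + real n / P) / cells"
    using cells_pos P_pos by (intro divide_right_mono add_left_mono divide_right_mono) auto
  finally show ?thesis unfolding E_def P_def a_def .
qed

lemma threshold_pos: "0 < T"
proof -
  have "0 < length atoms" using wf unfolding wf_query_def by auto
  moreover have "0 \<le> real n / (\<Prod>i\<in>set (atoms!0). real (g i))"
    by (intro divide_nonneg_nonneg prod_nonneg) auto
  ultimately show ?thesis using threshold_large[of 0] by (smt (verit) of_nat_0_less_iff mult_pos_pos)
qed

text \<open>Markov's inequality, with the threshold condition making the overflow probability of each
  relation at most \<open>1 / (2 \<ell>)\<close> of the probability that \<open>c\<close> lies in the cell of \<open>s\<close>.\<close>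

lemma prob_cell_overflow:
  assumes D: "D \<in> matching_dbs atoms n" and c: "c \<in> answers k atoms D" and s: "s < p"
    and j: "j < length atoms"
  shows "measure_pmf.prob hash
           (answer_in_cell k c (\<sigma> s) \<inter> {h. T < real (card (cell_share atoms \<sigma> h j s (D j)))})
         \<le> 1 / (2 * real (length atoms) * cells)"
proof -
  define E where "E = answer_in_cell k c (\<sigma> s)"
  define X where "X h = real (card (cell_share atoms \<sigma> h j s (D j)))" for h
  define L where "L = real (length atoms)"
  have "0 < length atoms" using j by linarith
  hence L_pos: "0 < L" unfolding L_def by simp
  have "T * measure_pmf.prob hash (E \<inter> {h. T < X h})
      = measure_pmf.expectation hash (\<lambda>h. T * indicator (E \<inter> {h. T < X h}) h)"
    by simp
  also have "\<dots> \<le> measure_pmf.expectation hash (\<lambda>h. indicator E h * X h)"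
    by (intro integral_mono integrable_hash) (auto simp: indicator_def X_def)
  also have "\<dots> \<le> (1 + real n / (\<Prod>i\<in>set (atoms!j). real (g i))) / cells"
    unfolding E_def X_def by (rule expectation_cell_share[OF D c s j])
  also have "\<dots> \<le> T / (2 * L) / cells"
    using threshold_large[OF j] L_pos cells_pos
    by (intro divide_right_mono) (auto simp: L_def field_simps)
  finally show ?thesis
    using threshold_pos cells_pos L_pos unfolding E_def X_def L_def by (simp add: field_simps)
qed

lemma prob_cell_fits:
  assumes D: "D \<in> matching_dbs atoms n" and c: "c \<in> answers k atoms D" and s: "s < p"
  shows "1 / (2 * cells) \<le> measure_pmf.prob hash (answer_in_cell k c (\<sigma> s) \<inter>
           {h. \<forall>j<length atoms. real (card (cell_share atoms \<sigma> h j s (D j))) \<le> T})"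
proof -
  define E where "E = answer_in_cell k c (\<sigma> s)"
  define Fits where "Fits = {h. \<forall>j<length atoms. real (card (cell_share atoms \<sigma> h j s (D j))) \<le> T}"
  define Over where "Over j = E \<inter> {h. T < real (card (cell_share atoms \<sigma> h j s (D j)))}" for j
  define L where "L = length atoms"
  have L_pos: "0 < real L" using wf unfolding wf_query_def L_def by auto
  have "E \<subseteq> (E \<inter> Fits) \<union> (\<Union>j<L. Over j)"
    unfolding Fits_def Over_def L_def by (auto simp: not_le)
  hence "1 / cells \<le> measure_pmf.prob hash ((E \<inter> Fits) \<union> (\<Union>j<L. Over j))"
    unfolding E_def prob_answer_in_server_cell[OF D c s, symmetric]
    by (intro measure_pmf.finite_measure_mono) auto
  also have "\<dots> \<le> measure_pmf.prob hash (E \<inter> Fits) + measure_pmf.prob hash (\<Union>j<L. Over j)"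
    by (rule measure_Un_le) auto
  also have "measure_pmf.prob hash (\<Union>j<L. Over j) \<le> (\<Sum>j<L. measure_pmf.prob hash (Over j))"
    by (rule measure_pmf.finite_measure_subadditive_finite) auto
  also have "\<dots> \<le> (\<Sum>j<L. 1 / (2 * real L * cells))"
    unfolding Over_def E_def L_def by (intro sum_mono prob_cell_overflow[OF D c s]) simp
  also have "\<dots> = 1 / (2 * cells)" using L_pos by simp
  finally show ?thesis unfolding E_def Fits_def by (simp add: field_simps)
qed

text \<open>The events for distinct servers are disjoint because their cells differ.\<close>

lemma prob_reported_ge:
  assumes D: "D \<in> matching_dbs atoms n" and c: "c \<in> answers k atoms D"
  shows "real p / (2 * cells) \<le> measure_pmf.prob hash {h. c \<in> reported k atoms p (hypercube_msg T atoms \<sigma> h) D}"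
proof -
  define A where "A s = answer_in_cell k c (\<sigma> s) \<inter>
      {h. \<forall>j<length atoms. real (card (cell_share atoms \<sigma> h j s (D j))) \<le> T}" for s
  have disj: "disjoint_family_on A {..<p}"
    unfolding disjoint_family_on_def
  proof (intro ballI impI)
    fix s s' assume "s \<in> {..<p}" "s' \<in> {..<p}" "s \<noteq> s'"
    then obtain i where "i < k" "\<sigma> s i \<noteq> \<sigma> s' i" using cells_distinct by blast
    thus "A s \<inter> A s' = {}" unfolding A_def answer_in_cell_def by auto
  qed
  have "real p / (2 * cells) = (\<Sum>s<p. 1 / (2 * cells))" by simp
  also have "\<dots> \<le> (\<Sum>s<p. measure_pmf.prob hash (A s))"
    unfolding A_def by (intro sum_mono prob_cell_fits[OF D c]) simp
  also have "\<dots> = measure_pmf.prob hash (\<Union>s<p. A s)"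
    using disj by (intro measure_pmf.finite_measure_finite_Union[symmetric]) auto
  also have "\<dots> \<le> measure_pmf.prob hash {h. c \<in> reported k atoms p (hypercube_msg T atoms \<sigma> h) D}"
    unfolding A_def using reported_hypercube_msgI[OF wf c]
    by (intro measure_pmf.finite_measure_mono) auto
  finally show ?thesis .
qed

lemma prob_reported_le:
  assumes D: "D \<in> matching_dbs atoms n" and c: "c \<in> answers k atoms D"
  shows "measure_pmf.prob hash {h. c \<in> reported k atoms p (hypercube_msg T atoms \<sigma> h) D} \<le> real p / cells"
proof -
  have "measure_pmf.prob hash {h. c \<in> reported k atoms p (hypercube_msg T atoms \<sigma> h) D}
        \<le> measure_pmf.prob hash (\<Union>s<p. answer_in_cell k c (\<sigma> s))"
    by (intro measure_pmf.finite_measure_mono) (auto dest!: reported_hypercube_msgD(2)[OF wf])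
  also have "\<dots> \<le> (\<Sum>s<p. measure_pmf.prob hash (answer_in_cell k c (\<sigma> s)))"
    by (rule measure_pmf.finite_measure_subadditive_finite) auto
  also have "\<dots> = real p / cells"
    using prob_answer_in_server_cell[OF D c] by simp
  finally show ?thesis .
qed

lemma expectation_card_reported:
  assumes D: "D \<in> matching_dbs atoms n"
  shows "measure_pmf.expectation hash (\<lambda>h. real (card (reported k atoms p (hypercube_msg T atoms \<sigma> h) D)))
       = (\<Sum>c\<in>answers k atoms D. measure_pmf.prob hash {h. c \<in> reported k atoms p (hypercube_msg T atoms \<sigma> h) D})"
proof -
  have "real (card (reported k atoms p (hypercube_msg T atoms \<sigma> h) D))
        = (\<Sum>c\<in>answers k atoms D. indicator {h. c \<in> reported k atoms p (hypercube_msg T atoms \<sigma> h) D} h)" for h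
  proof -
    have "reported k atoms p (hypercube_msg T atoms \<sigma> h) D \<subseteq> answers k atoms D"
      using reported_hypercube_msgD(1)[OF wf] by blast
    thus ?thesis using finite_answers[OF wf D]
      by (simp add: indicator_def sum.If_cases Int_absorb1 Int_def[symmetric])
  qed
  thus ?thesis by (simp add: Bochner_Integration.integral_sum[OF integrable_hash])
qed

lemma expectation_card_reported_bounds:
  assumes D: "D \<in> matching_dbs atoms n"
  shows "real (card (answers k atoms D)) * (real p / (2 * cells))
           \<le> measure_pmf.expectation hash (\<lambda>h. real (card (reported k atoms p (hypercube_msg T atoms \<sigma> h) D)))"
    and "measure_pmf.expectation hash (\<lambda>h. real (card (reported k atoms p (hypercube_msg T atoms \<sigma> h) D)))
           \<le> real (card (answers k atoms D)) * (real p / cells)"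
  unfolding expectation_card_reported[OF D]
  using sum_mono[OF prob_reported_ge[OF D]] sum_mono[OF prob_reported_le[OF D]]
  by (simp_all add: mult.commute)

lemma expected_reported_bounds:
  defines "R \<equiv> map_pmf (hypercube_msg T atoms \<sigma>) hash"
  shows "expected_answers k atoms n * (real p / (2 * cells)) \<le> expected_reported k atoms n p R"
    and "expected_reported k atoms n p R \<le> expected_answers k atoms n * (real p / cells)"
proof -
  let ?M = "pmf_of_set (matching_dbs atoms n)"
  have R: "expected_reported k atoms n p R = measure_pmf.expectation ?M
      (\<lambda>D. measure_pmf.expectation hash (\<lambda>h. real (card (reported k atoms p (hypercube_msg T atoms \<sigma> h) D))))"
    unfolding expected_reported_def R_def by simp
  have A: "expected_answers k atoms n * x
      = measure_pmf.expectation ?M (\<lambda>D. real (card (answers k atoms D)) * x)" for x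
    unfolding expected_answers_def by simp
  have fin: "finite (matching_dbs atoms n)" "matching_dbs atoms n \<noteq> {}"
    using finite_matching_dbs matching_dbs_nonempty[OF wf] .
  show "expected_answers k atoms n * (real p / (2 * cells)) \<le> expected_reported k atoms n p R"
    unfolding R A by (intro expectation_pmf_of_set_mono fin expectation_card_reported_bounds)
  show "expected_reported k atoms n p R \<le> expected_answers k atoms n * (real p / cells)"
    unfolding R A by (intro expectation_pmf_of_set_mono fin expectation_card_reported_bounds)
qed


lemma expected_reported_ge_powr:
  assumes "1 \<le> p" and "cells \<le> 2 ^ k * real p powr W"
  shows "1 / 2 ^ (k + 1) * expected_answers k atoms n / real p powr (W - 1)
           \<le> expected_reported k atoms n p (map_pmf (hypercube_msg T atoms \<sigma>) hash)"
proof -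
  have "1 / 2 ^ (k + 1) * expected_answers k atoms n / real p powr (W - 1)
      = expected_answers k atoms n * (real p / (2 * (2 ^ k * real p powr W)))"
    using assms(1) by (simp add: powr_diff field_simps)
  also have "\<dots> \<le> expected_answers k atoms n * (real p / (2 * cells))"
    using assms cells_pos expected_answers_nonneg
    by (intro mult_left_mono divide_left_mono) auto
  also have "\<dots> \<le> expected_reported k atoms n p (map_pmf (hypercube_msg T atoms \<sigma>) hash)"
    by (rule expected_reported_bounds(1))
  finally show ?thesis .
qed

lemma expected_reported_le_powr:
  assumes "1 \<le> p" and "real p powr W \<le> cells"
  shows "expected_reported k atoms n p (map_pmf (hypercube_msg T atoms \<sigma>) hash)
           \<le> expected_answers k atoms n / real p powr (W - 1)"
proof -
  have "expected_reported k atoms n p (map_pmf (hypercube_msg T atoms \<sigma>) hash)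
      \<le> expected_answers k atoms n * (real p / cells)"
    by (rule expected_reported_bounds(2))
  also have "\<dots> \<le> expected_answers k atoms n * (real p / real p powr W)"
    using assms cells_pos expected_answers_nonneg
    by (intro mult_left_mono divide_left_mono) auto
  also have "\<dots> = expected_answers k atoms n / real p powr (W - 1)"
    using assms(1) by (simp add: powr_diff field_simps)
  finally show ?thesis .
qed
end

section \<open>Choice of the shares\<close>

definition share :: "nat \<Rightarrow> real \<Rightarrow> nat" where
  "share p w = nat \<lceil>real p powr w\<rceil>"

lemma share_bounds:
  assumes "1 \<le> p" and "0 \<le> w"
  shows "real p powr w \<le> real (share p w)" and "real (share p w) \<le> 2 * real p powr w"
    and "1 \<le> share p w"
proof -
  have x: "1 \<le> real p powr w" using assms by (intro ge_one_powr_ge_zero) auto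
  have "real (share p w) = of_int \<lceil>real p powr w\<rceil>" unfolding share_def using x by simp
  thus "real p powr w \<le> real (share p w)" and "real (share p w) \<le> 2 * real p powr w"
    using ceiling_correct[of "real p powr w"] x by linarith+
  with x show "1 \<le> share p w" by linarith
qed

lemma prod_share_bounds:
  assumes "1 \<le> p" and "\<And>i. i \<in> I \<Longrightarrow> 0 \<le> w i" and "finite I"
  shows "real p powr (\<Sum>i\<in>I. w i) \<le> (\<Prod>i\<in>I. real (share p (w i)))"
    and "(\<Prod>i\<in>I. real (share p (w i))) \<le> 2 ^ card I * real p powr (\<Sum>i\<in>I. w i)"
proof -
  have pw: "real p powr (\<Sum>i\<in>I. w i) = (\<Prod>i\<in>I. real p powr w i)"
    using assms by (simp add: powr_sum)
  show "real p powr (\<Sum>i\<in>I. w i) \<le> (\<Prod>i\<in>I. real (share p (w i)))"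
    unfolding pw using share_bounds(1)[OF assms(1) assms(2)] by (intro prod_mono) auto
  have "(\<Prod>i\<in>I. real (share p (w i))) \<le> (\<Prod>i\<in>I. 2 * real p powr w i)"
    using share_bounds(2)[OF assms(1) assms(2)] by (intro prod_mono) auto
  thus "(\<Prod>i\<in>I. real (share p (w i))) \<le> 2 ^ card I * real p powr (\<Sum>i\<in>I. w i)"
    unfolding pw by (simp add: prod.distrib)
qed

lemma exists_distinct_cells:
  assumes "real p \<le> (\<Prod>i<k. real (g i))"
  obtains \<sigma> :: "nat \<Rightarrow> nat \<Rightarrow> nat"
  where "\<And>s i. s < p \<Longrightarrow> i < k \<Longrightarrow> \<sigma> s i < g i"
    and "\<And>s s'. s < p \<Longrightarrow> s' < p \<Longrightarrow> s \<noteq> s' \<Longrightarrow> \<exists>i<k. \<sigma> s i \<noteq> \<sigma> s' i"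
proof -
  define cells where "cells = PiE {..<k} (\<lambda>i. {..<g i})"
  have "real (card cells) = (\<Prod>i<k. real (g i))" unfolding cells_def by (simp add: card_PiE)
  hence "card {..<p} \<le> card cells" using assms by simp
  moreover have "finite cells" unfolding cells_def by (intro finite_PiE) auto
  ultimately obtain \<sigma> where \<sigma>: "\<sigma> ` {..<p} \<subseteq> cells" "inj_on \<sigma> {..<p}"
    using card_le_inj[of "{..<p}" cells] by auto
  show thesis
  proof (rule that)
    show "\<sigma> s i < g i" if "s < p" "i < k" for s i using \<sigma>(1) that unfolding cells_def by auto
    show "\<exists>i<k. \<sigma> s i \<noteq> \<sigma> s' i" if "s < p" "s' < p" "s \<noteq> s'" for s s'
    proof (rule ccontr)
      assume "\<not> (\<exists>i<k. \<sigma> s i \<noteq> \<sigma> s' i)"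
      hence "\<sigma> s = \<sigma> s'"
        using \<sigma>(1) that by (intro PiE_ext[of _ "{..<k}" "\<lambda>i. {..<g i}"]) (auto simp: cells_def)
      thus False using \<sigma>(2) that by (auto dest: inj_onD)
    qed
  qed
qed

lemma prod_share_atom_ge:
  assumes cover: "frac_vertex_cover atoms v" and "j < length atoms"
    and "1 \<le> p" and "eps < 1"
  shows "real p powr (1 - eps) \<le> (\<Prod>i\<in>set (atoms!j). real (share p ((1 - eps) * v i)))"
proof -
  have "real p powr (1 - eps) \<le> real p powr ((1 - eps) * (\<Sum>i\<in>set (atoms!j). v i))"
    using assms unfolding frac_vertex_cover_def by (intro powr_mono) auto
  also have "\<dots> \<le> (\<Prod>i\<in>set (atoms!j). real (share p ((1 - eps) * v i)))"
    using prod_share_bounds(1)[of p "set (atoms!j)" "\<lambda>i. (1 - eps) * v i"] assms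
    unfolding frac_vertex_cover_def by (simp add: sum_distrib_left)
  finally show ?thesis .
qed

text \<open>With shares \<open>g i \<approx> p^(1-\<epsilon>) v\<^sub>i\<close> for an optimal cover \<open>v\<close>, the grid has
  \<open>\<Theta>(p^(\<tau>*(1-\<epsilon>)))\<close> cells and every relation is spread over at least \<open>p^(1-\<epsilon>)\<close> of them.\<close>

lemma exists_hypercube_algorithm:
  assumes wf: "wf_query k atoms" and cover: "frac_vertex_cover atoms v"
    and v_sum: "(\<Sum>i<k. v i) = tau_star k atoms"
    and eps: "0 \<le> eps" "eps < 1" and W: "1 \<le> tau_star k atoms * (1 - eps)"
    and p: "1 \<le> p" and n: "p \<le> n"
  shows "\<exists>R. one_round_mpc atoms n p eps (4 * real (length atoms) ^ 2) R \<and>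
           1 / 2 ^ (k + 1) * expected_answers k atoms n / real p powr (tau_star k atoms * (1 - eps) - 1)
             \<le> expected_reported k atoms n p R \<and>
           expected_reported k atoms n p R
             \<le> expected_answers k atoms n / real p powr (tau_star k atoms * (1 - eps) - 1)"
proof -
  define W where "W = tau_star k atoms * (1 - eps)"
  define L where "L = real (length atoms)"
  define w where "w i = (1 - eps) * v i" for i
  define g where "g i = share p (w i)" for i
  define q where "q = real p powr (1 - eps)"
  define T where "T = 4 * L * real n / q"
  have w_nonneg: "0 \<le> w i" for i using cover eps unfolding w_def frac_vertex_cover_def by auto
  have p_pos: "0 < real p" using p by simp
  have sum_w: "(\<Sum>i<k. w i) = W" unfolding w_def W_def v_sum[symmetric] sum_distrib_right by (simp add: mult.commute)
  have grid_size: "real p powr W \<le> (\<Prod>i<k. real (g i))" "(\<Prod>i<k. real (g i)) \<le> 2 ^ k * real p powr W"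
    using prod_share_bounds[of p "{..<k}" w] p w_nonneg unfolding g_def sum_w by auto
  have p_le: "real p \<le> real p powr W" using powr_mono[of 1 W "real p"] p W unfolding W_def by simp
  obtain \<sigma> where \<sigma>: "\<And>s i. s < p \<Longrightarrow> i < k \<Longrightarrow> \<sigma> s i < g i"
    "\<And>s s'. s < p \<Longrightarrow> s' < p \<Longrightarrow> s \<noteq> s' \<Longrightarrow> \<exists>i<k. \<sigma> s i \<noteq> \<sigma> s' i"
    using exists_distinct_cells[OF order.trans[OF p_le grid_size(1)]] by blast
  have q_pos: "0 < q" unfolding q_def using p_pos by simp
  have q_le_n: "q \<le> real n"
    using powr_mono[of "1 - eps" 1 "real p"] p n eps unfolding q_def by simp
  have "2 * L * (1 + real n / (\<Prod>i\<in>set (atoms!j). real (g i))) \<le> T" if j: "j < length atoms" for j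
  proof -
    let ?a = "atoms!j"
    have "q \<le> (\<Prod>i\<in>set ?a. real (g i))"
      using prod_share_atom_ge[OF cover j p eps(2)] unfolding q_def g_def w_def .
    hence "real n / (\<Prod>i\<in>set ?a. real (g i)) \<le> real n / q"
      using q_pos by (intro divide_left_mono) auto
    moreover have "1 \<le> real n / q" using q_le_n q_pos by simp
    ultimately have "1 + real n / (\<Prod>i\<in>set ?a. real (g i)) \<le> 2 * (real n / q)" by linarith
    hence "2 * L * (1 + real n / (\<Prod>i\<in>set ?a. real (g i))) \<le> 2 * L * (2 * (real n / q))"
      by (intro mult_left_mono) (simp_all add: L_def)
    thus ?thesis unfolding T_def by simp
  qed
  then interpret hypercube k n p atoms g \<sigma> T
    using wf \<sigma> share_bounds(3)[OF p w_nonneg] unfolding g_def L_def by unfold_locales auto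
  define R where "R = map_pmf (hypercube_msg T atoms \<sigma>) hash"
  have "one_round_mpc atoms n p eps (4 * L ^ 2) R"
    unfolding R_def using eps threshold_pos q_pos
    by (intro one_round_mpc_hypercube_msg) (auto simp: T_def L_def q_def power2_eq_square mult_ac)
  moreover have "1 / 2 ^ (k + 1) * expected_answers k atoms n / real p powr (W - 1)
      \<le> expected_reported k atoms n p R"
    unfolding R_def using grid_size(2) p by (intro expected_reported_ge_powr) (auto simp: cells_def)
  moreover have "expected_reported k atoms n p R \<le> expected_answers k atoms n / real p powr (W - 1)"
    unfolding R_def using grid_size(1) p by (intro expected_reported_le_powr) (auto simp: cells_def)
  ultimately show ?thesis unfolding L_def W_def by blast
qed

theorem proposition2:
  fixes k :: nat and atoms :: "nat list list" and eps :: real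
  assumes "wf_query k atoms"
    and "connected_query k atoms"
    and "0 \<le> eps"
    and "eps < 1 - 1 / tau_star k atoms"
  shows "\<exists>C>0. \<exists>c1>0. \<exists>c2>0. \<forall>p::nat. p \<ge> 1 \<longrightarrow> (\<exists>n0. \<forall>n\<ge>n0. \<exists>R.
           one_round_mpc atoms n p eps C R \<and>
           c1 * expected_answers k atoms n / real p powr (tau_star k atoms * (1 - eps) - 1)
             \<le> expected_reported k atoms n p R \<and>
           expected_reported k atoms n p R
             \<le> c2 * expected_answers k atoms n / real p powr (tau_star k atoms * (1 - eps) - 1))"
proof -
  obtain v where cover: "frac_vertex_cover atoms v" and v_sum: "(\<Sum>i<k. v i) = tau_star k atoms"
    using tau_star_attained[OF assms(1)] .
  have tau: "1 \<le> tau_star k atoms" using one_le_sum_frac_vertex_cover[OF assms(1) cover] v_sum by simp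
  hence "0 < 1 / tau_star k atoms" by simp
  hence eps: "eps < 1" using assms(4) by linarith
  have "1 / tau_star k atoms < 1 - eps" using assms(4) by simp
  hence "1 < (1 - eps) * tau_star k atoms" using tau by (simp add: divide_less_eq)
  hence W: "1 \<le> tau_star k atoms * (1 - eps)" by (simp add: mult.commute)
  have "0 < 4 * real (length atoms) ^ 2" using assms(1) unfolding wf_query_def by simp
  moreover have "\<forall>p::nat. p \<ge> 1 \<longrightarrow> (\<exists>n0. \<forall>n\<ge>n0. \<exists>R.
           one_round_mpc atoms n p eps (4 * real (length atoms) ^ 2) R \<and>
           1 / 2 ^ (k + 1) * expected_answers k atoms n / real p powr (tau_star k atoms * (1 - eps) - 1)
             \<le> expected_reported k atoms n p R \<and>
           expected_reported k atoms n p R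
             \<le> 1 * expected_answers k atoms n / real p powr (tau_star k atoms * (1 - eps) - 1))"
    using exists_hypercube_algorithm[OF assms(1) cover v_sum assms(3) eps W] by auto
  moreover have "0 < 1 / (2::real) ^ (k + 1)" by simp
  ultimately show ?thesis using zero_less_one by blast
qed

end
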